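(* Assume the setting in the context (the additive model, the Causal Faithfulness Condition, and the function class $\mathcal G$ satisfying the residual-dependence assumption). Let $x_i, x_j, x_{k_1},\dots,x_{k_m}\in X$ be distinct observed variables and let $K=\{x_{k_1},\dots,x_{k_m}\}$. Suppose that: (a) for every $q=1,\dots,m$: for all $M\subseteq X\setminus\{x_i,x_{k_q}\}$, all $N\subseteq X\setminus\{x_j,x_{k_q}\}$ and all $G_1,G_2\in\mathcal G$, we have $x_i-G_1(M)\not\perp\!\!\!\perp x_j-G_2(N)$; (b) for all $M\subseteq X\setminus\{x_i,x_j\}$, all $N\subseteq X\setminus\{x_j\}$ and all $G_1,G_2\in\mathcal G$, we have $x_i-G_1(M)\not\perp\!\!\!\perp x_j-G_2(N)$; (c) there exist $Q_1,Q_2\subseteq K$ with $Q_1\cup Q_2=K$, functions $G_1,G_2\in\mathcal G$, and sets $M,N\subseteq X\setminus(\{x_i,x_j\}\cup K)$ such that $x_i-G_1(M\cup\{x_j\}\cup Q_1)\perp\!\!\!\perp x_j-G_2(N\cup Q_2)$. Then $x_j$ is a visible parent of $x_i$ (with respect to $X$), and each $x_{k_q}$ is a parent of $x_i$ or a parent of $x_j$ in $G$; consequently each $x_{k_q}$ is an ancestor of $x_i$.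
   Context: Model: $X$ is a finite set of observed random variables and $U$ a finite set of unobserved random variables; $V=X\cup U$ and $G=(V,E)$ is a DAG on $V$. Each $v_i\in V$ satisfies $v_i=\sum_{x_j\in \mathrm{pa}(v_i)\cap X} f^{(i)}_j(x_j)+\sum_{u_k\in\mathrm{pa}(v_i)\cap U} f^{(i)}_k(u_k)+n_i$, where the $f$'s are nonlinear functions and the external noises $n_i$ are jointly independent. "Parent", "ancestor", "path", "d-separation" refer to $G$ (a path has distinct vertices). Causal Faithfulness Condition (CFC): any conditional independence among variables of $V$ that is not entailed by d-separation in $G$ does not hold. $\perp\!\!\!\perp$ denotes statistical independence, $\not\perp\!\!\!\perp$ dependence. Function class: $\mathcal G$ is a class of generalized additive functions: for $G\in\mathcal G$ and a set $M$ of observed variables, $G(M)=\sum_{x_m\in M} g_m(x_m)$ (with $G(\emptyset)=0$). It satisfies: for any $x_i,x_j\in X$, sets $M,N\subseteq X$, $G_1,G_2\in\mathcal G$ and external noise $n_k$, if $n_k\not\perp\!\!\!\perp x_i-G_1(M)$ and $n_k\not\perp\!\!\!\perp x_j-G_2(N)$ then $x_i-G_1(M)\not\perp\!\!\!\perp x_j-G_2(N)$. Definitions, for $X'\subseteq X$ and $x_i,x_j\in X'$: an unobserved causal path (UCP) from $x_i$ to $x_j$ w.r.t. $X'$ is a directed path $x_i\to\cdots\to v_k\to x_j$ in $G$ with $v_k\notin X'$; an unobserved backdoor path (UBP) between $x_i$ and $x_j$ w.r.t. $X'$ is a path $x_i\leftarrow v_k\leftarrow\cdots\leftarrow v\to\cdots\to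 v_l\to x_j$ with $v_k,v_l\notin X'$ (allowing $v=v_k$, $v=v_l$, or $v=v_k=v_l$; $v$ may be in $X'$). "UBP/UCP between $x_i$ and $x_j$" means a UBP or a UCP in either direction. $x_j$ is a visible parent of $x_i$ w.r.t. $X'$ if $x_j$ is a parent of $x_i$ and there is no UBP/UCP between them w.r.t. $X'$; $(x_i,x_j)$ is a visible non-edge w.r.t. $X'$ if there is no edge between them and no UBP/UCP between them w.r.t. $X'$; $(x_i,x_j)$ is invisible w.r.t. $X'$ if there is a UBP/UCP between them w.r.t. $X'$. When $X'$ is omitted, $X'=X$. Standing facts (taken as known), for $X'\subseteq X$ and distinct $x_i,x_j\in X'$: (F1) $x_j$ is a visible parent of $x_i$ w.r.t. $X'$ iff [for all $G_1,G_2\in\mathcal G$, $M\subseteq X'\setminus\{x_i,x_j\}$, $N\subseteq X'\setminus\{x_j\}$: $x_i-G_1(M)\not\perp\!\!\!\perp x_j-G_2(N)$] and [there exist $G_1,G_2\in\mathcal G$, $M\subseteq X'\setminus\{x_i\}$, $N\subseteq X'\setminus\{x_i,x_j\}$ with $x_i-G_1(M)\perp\!\!\!\perp x_j-G_2(N)$]. (F2) $(x_i,x_j)$ is a visible non-edge w.r.t. $X'$ iff there exist $G_1,G_2\in\mathcal G$ and $M,N\subseteq X'\setminus\{x_i,x_j\}$ with $x_i-G_1(M)\perp\!\!\!\perp x_j-G_2(N)$. (F3) $(x_i,x_j)$ is invisible w.r.t. $X'$ iff for all $M\subseteq X'\setminus\{x_i\}$, $N\subseteq X'\setminus\{x_j\}$,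 $G_1,G_2\in\mathcal G$: $x_i-G_1(M)\not\perp\!\!\!\perp x_j-G_2(N)$. *)

theory Defs
  imports "HOL-Probability.Probability"
begin

text \<open>
  Vertices of the DAG have type 'v; the probability space is M :: 'a measure.
  val v is the random variable attached to vertex v, n v its external noise,
  f v p the (nonlinear) function by which parent p enters the equation of v.
  E is the edge set of the DAG G, (p,v) \<in> E meaning p \<rightarrow> v.
\<close>

definition indep_rv :: "'a measure \<Rightarrow> ('a \<Rightarrow> real) \<Rightarrow> ('a \<Rightarrow> real) \<Rightarrow> bool" where
  "indep_rv M Y Z \<longleftrightarrow> prob_space.indep_var M borel Y borel Z"

definition gen_alg :: "'a measure \<Rightarrow> ('v \<Rightarrow> 'a \<Rightarrow> real) \<Rightarrow> 'v set \<Rightarrow> 'a measure" where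
  "gen_alg M val S = sigma (space M) (\<Union>v\<in>S. {val v -` B \<inter> space M | B. B \<in> sets borel})"

definition cond_indep :: "'a measure \<Rightarrow> ('v \<Rightarrow> 'a \<Rightarrow> real) \<Rightarrow> 'v set \<Rightarrow> 'v set \<Rightarrow> 'v set \<Rightarrow> bool" where
  "cond_indep M val A B S \<longleftrightarrow>
     (\<forall>E1 \<in> sets (gen_alg M val A). \<forall>E2 \<in> sets (gen_alg M val B).
        AE \<omega> in M. real_cond_exp M (gen_alg M val S) (indicator (E1 \<inter> E2)) \<omega> =
          real_cond_exp M (gen_alg M val S) (indicator E1) \<omega> *
          real_cond_exp M (gen_alg M val S) (indicator E2) \<omega>)"

definition is_path :: "('v \<times> 'v) set \<Rightarrow> 'v list \<Rightarrow> bool" where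
  "is_path E p \<longleftrightarrow> p \<noteq> [] \<and> distinct p \<and>
     (\<forall>t. Suc t < length p \<longrightarrow> (p!t, p!Suc t) \<in> E \<or> (p!Suc t, p!t) \<in> E)"

definition is_dpath :: "('v \<times> 'v) set \<Rightarrow> 'v list \<Rightarrow> bool" where
  "is_dpath E p \<longleftrightarrow> p \<noteq> [] \<and> distinct p \<and>
     (\<forall>t. Suc t < length p \<longrightarrow> (p!t, p!Suc t) \<in> E)"

definition is_collider :: "('v \<times> 'v) set \<Rightarrow> 'v list \<Rightarrow> nat \<Rightarrow> bool" where
  "is_collider E p t \<longleftrightarrow> 0 < t \<and> Suc t < length p \<and>
     (p!(t-1), p!t) \<in> E \<and> (p!Suc t, p!t) \<in> E"

definition d_connecting :: "('v \<times> 'v) set \<Rightarrow> 'v set \<Rightarrow> 'v list \<Rightarrow> bool" where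
  "d_connecting E Z p \<longleftrightarrow> is_path E p \<and>
     (\<forall>t. 0 < t \<and> Suc t < length p \<longrightarrow>
        (is_collider E p t \<longrightarrow> (p!t \<in> Z \<or> (\<exists>d\<in>Z. (p!t, d) \<in> E\<^sup>+))) \<and>
        (\<not> is_collider E p t \<longrightarrow> p!t \<notin> Z))"

definition d_separated :: "('v \<times> 'v) set \<Rightarrow> 'v set \<Rightarrow> 'v set \<Rightarrow> 'v set \<Rightarrow> bool" where
  "d_separated E A B Z \<longleftrightarrow>
     (\<forall>a\<in>A. \<forall>b\<in>B. \<not> (\<exists>p. hd p = a \<and> last p = b \<and> d_connecting E Z p))"

definition nonlinear :: "(real \<Rightarrow> real) \<Rightarrow> bool" where
  "nonlinear g \<longleftrightarrow> \<not> (\<exists>a b. \<forall>x. g x = a * x + b)"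

definition additive_model ::
  "'a measure \<Rightarrow> 'v set \<Rightarrow> 'v set \<Rightarrow> ('v \<times> 'v) set \<Rightarrow> ('v \<Rightarrow> 'v \<Rightarrow> real \<Rightarrow> real)
    \<Rightarrow> ('v \<Rightarrow> 'a \<Rightarrow> real) \<Rightarrow> ('v \<Rightarrow> 'a \<Rightarrow> real) \<Rightarrow> bool" where
  "additive_model M V X E f n val \<longleftrightarrow>
     prob_space M \<and> finite V \<and> X \<subseteq> V \<and> E \<subseteq> V \<times> V \<and> acyclic E \<and>
     (\<forall>v\<in>V. \<forall>p. (p, v) \<in> E \<longrightarrow> f v p \<in> borel_measurable borel \<and> nonlinear (f v p)) \<and>
     (\<forall>v\<in>V. n v \<in> borel_measurable M) \<and>
     prob_space.indep_vars M (\<lambda>_. borel) n V \<and>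
     (\<forall>v\<in>V. \<forall>\<omega>\<in>space M. val v \<omega> = (\<Sum>p\<in>{p. (p, v) \<in> E}. f v p (val p \<omega>)) + n v \<omega>)"

definition CFC :: "'a measure \<Rightarrow> 'v set \<Rightarrow> ('v \<times> 'v) set \<Rightarrow> ('v \<Rightarrow> 'a \<Rightarrow> real) \<Rightarrow> bool" where
  "CFC M V E val \<longleftrightarrow>
     (\<forall>A B S. A \<subseteq> V \<and> B \<subseteq> V \<and> S \<subseteq> V \<and> A \<inter> B = {} \<and> A \<inter> S = {} \<and> B \<inter> S = {} \<and>
        cond_indep M val A B S \<longrightarrow> d_separated E A B S)"

text \<open>G \<in> \<G> is given by component functions g; G(Ms) = \<Sum>m\<in>Ms. g m (x_m);
  resid val g i Ms is x_i - G(Ms).\<close>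
definition resid :: "('v \<Rightarrow> 'a \<Rightarrow> real) \<Rightarrow> ('v \<Rightarrow> real \<Rightarrow> real) \<Rightarrow> 'v \<Rightarrow> 'v set \<Rightarrow> 'a \<Rightarrow> real" where
  "resid val g i Ms = (\<lambda>\<omega>. val i \<omega> - (\<Sum>m\<in>Ms. g m (val m \<omega>)))"

definition function_class ::
  "'a measure \<Rightarrow> 'v set \<Rightarrow> 'v set \<Rightarrow> ('v \<Rightarrow> 'a \<Rightarrow> real) \<Rightarrow> ('v \<Rightarrow> 'a \<Rightarrow> real)
    \<Rightarrow> ('v \<Rightarrow> real \<Rightarrow> real) set \<Rightarrow> bool" where
  "function_class M V X n val GC \<longleftrightarrow>
     (\<forall>g\<in>GC. \<forall>m. g m \<in> borel_measurable borel) \<and>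
     (\<forall>i\<in>X. \<forall>j\<in>X. \<forall>Ms Ns. Ms \<subseteq> X \<longrightarrow> Ns \<subseteq> X \<longrightarrow> (\<forall>g1\<in>GC. \<forall>g2\<in>GC. \<forall>k\<in>V.
        \<not> indep_rv M (n k) (resid val g1 i Ms) \<and> \<not> indep_rv M (n k) (resid val g2 j Ns) \<longrightarrow>
        \<not> indep_rv M (resid val g1 i Ms) (resid val g2 j Ns)))"

text \<open>unobserved causal path from i to j: i \<rightarrow> ... \<rightarrow> v_k \<rightarrow> j with v_k \<notin> X'\<close>
definition UCP :: "('v \<times> 'v) set \<Rightarrow> 'v set \<Rightarrow> 'v \<Rightarrow> 'v \<Rightarrow> bool" where
  "UCP E X' i j \<longleftrightarrow> (\<exists>p. is_dpath E p \<and> hd p = i \<and> last p = j \<and> length p \<ge> 2 \<and>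
      p ! (length p - 2) \<notin> X')"

text \<open>unobserved backdoor path i \<leftarrow> v_k \<leftarrow> ... \<leftarrow> v \<rightarrow> ... \<rightarrow> v_l \<rightarrow> j, v_k, v_l \<notin> X';
  p1 is the directed path from v to i, p2 the one from v to j.\<close>
definition UBP :: "('v \<times> 'v) set \<Rightarrow> 'v set \<Rightarrow> 'v \<Rightarrow> 'v \<Rightarrow> bool" where
  "UBP E X' i j \<longleftrightarrow> (\<exists>p1 p2. is_dpath E p1 \<and> is_dpath E p2 \<and> hd p1 = hd p2 \<and>
      last p1 = i \<and> last p2 = j \<and> length p1 \<ge> 2 \<and> length p2 \<ge> 2 \<and>
      set (tl p1) \<inter> set (tl p2) = {} \<and>
      p1 ! (length p1 - 2) \<notin> X' \<and> p2 ! (length p2 - 2) \<notin> X')"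

definition UBP_or_UCP :: "('v \<times> 'v) set \<Rightarrow> 'v set \<Rightarrow> 'v \<Rightarrow> 'v \<Rightarrow> bool" where
  "UBP_or_UCP E X' i j \<longleftrightarrow> UBP E X' i j \<or> UBP E X' j i \<or> UCP E X' i j \<or> UCP E X' j i"

definition visible_parent :: "('v \<times> 'v) set \<Rightarrow> 'v set \<Rightarrow> 'v \<Rightarrow> 'v \<Rightarrow> bool" where
  "visible_parent E X' j i \<longleftrightarrow> (j, i) \<in> E \<and> \<not> UBP_or_UCP E X' i j"

definition visible_non_edge :: "('v \<times> 'v) set \<Rightarrow> 'v set \<Rightarrow> 'v \<Rightarrow> 'v \<Rightarrow> bool" where
  "visible_non_edge E X' i j \<longleftrightarrow> (i, j) \<notin> E \<and> (j, i) \<notin> E \<and> \<not> UBP_or_UCP E X' i j"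

definition invisible :: "('v \<times> 'v) set \<Rightarrow> 'v set \<Rightarrow> 'v \<Rightarrow> 'v \<Rightarrow> bool" where
  "invisible E X' i j \<longleftrightarrow> UBP_or_UCP E X' i j"

section \<open>Standing facts F1--F3 (taken as known in the paper's context)\<close>

definition standing_facts ::
  "'a measure \<Rightarrow> 'v set \<Rightarrow> ('v \<times> 'v) set \<Rightarrow> ('v \<Rightarrow> 'a \<Rightarrow> real)
    \<Rightarrow> ('v \<Rightarrow> real \<Rightarrow> real) set \<Rightarrow> bool" where
  "standing_facts M X E val GC \<longleftrightarrow>
    (\<forall>X' \<subseteq> X. \<forall>i\<in>X'. \<forall>j\<in>X'. i \<noteq> j \<longrightarrow>
      (visible_parent E X' j i \<longleftrightarrow>
         (\<forall>g1\<in>GC. \<forall>g2\<in>GC. \<forall>Ms Ns. Ms \<subseteq> X' - {i, j} \<longrightarrow> Ns \<subseteq> X' - {j} \<longrightarrow>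
             \<not> indep_rv M (resid val g1 i Ms) (resid val g2 j Ns)) \<and>
         (\<exists>g1\<in>GC. \<exists>g2\<in>GC. \<exists>Ms Ns. Ms \<subseteq> X' - {i} \<and> Ns \<subseteq> X' - {i, j} \<and>
             indep_rv M (resid val g1 i Ms) (resid val g2 j Ns))) \<and>
      (visible_non_edge E X' i j \<longleftrightarrow>
         (\<exists>g1\<in>GC. \<exists>g2\<in>GC. \<exists>Ms Ns. Ms \<subseteq> X' - {i, j} \<and> Ns \<subseteq> X' - {i, j} \<and>
             indep_rv M (resid val g1 i Ms) (resid val g2 j Ns))) \<and>
      (invisible E X' i j \<longleftrightarrow>
         (\<forall>g1\<in>GC. \<forall>g2\<in>GC. \<forall>Ms Ns. Ms \<subseteq> X' - {i} \<longrightarrow> Ns \<subseteq> X' - {j} \<longrightarrow>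
             \<not> indep_rv M (resid val g1 i Ms) (resid val g2 j Ns))))"

end

theory Submission
  imports Defs
begin

text \<open>
  Conditions (b) and (c) are the two residual tests characterising a visible parent (F1), so
  \<open>x\<^sub>j\<close> is a visible parent of \<open>x\<^sub>i\<close>; in particular there is no unobserved path between them
  w.r.t. \<open>X\<close>. Condition (a) says, by F3, that the pair becomes invisible once \<open>x\<^sub>k\<close> is
  removed from the observed set. The new unobserved causal or backdoor path must then have
  \<open>x\<^sub>k\<close> as the vertex next to \<open>x\<^sub>i\<close> or \<open>x\<^sub>j\<close>, so \<open>x\<^sub>k\<close> is a parent of one of them, and
  hence an ancestor of \<open>x\<^sub>i\<close> via the edge \<open>x\<^sub>j \<rightarrow> x\<^sub>i\<close>. The model, faithfulness and
  function-class hypotheses are needed only through F1 and F3.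
\<close>

lemma is_dpath_last_edge:
  assumes "is_dpath E p" "length p \<ge> 2"
  shows "(p ! (length p - 2), last p) \<in> E"
proof -
  have "(p ! (length p - 2), p ! Suc (length p - 2)) \<in> E"
    using assms unfolding is_dpath_def by simp
  moreover have "Suc (length p - 2) = length p - 1"
    using assms(2) by simp
  moreover have "last p = p ! (length p - 1)"
    using assms(1) by (simp add: last_conv_nth is_dpath_def)
  ultimately show ?thesis by simp
qed

lemma UCP_remove_observed:
  assumes "UCP E (X - {k}) i j" "\<not> UCP E X i j"
  shows "(k, j) \<in> E"
proof -
  obtain p where p: "is_dpath E p" "hd p = i" "last p = j" "length p \<ge> 2"
      "p ! (length p - 2) \<notin> X - {k}"
    using assms(1) unfolding UCP_def by blast
  have "p ! (length p - 2) = k"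
    using p assms(2) unfolding UCP_def by blast
  with is_dpath_last_edge[OF p(1,4)] p(3) show ?thesis by simp
qed

lemma UBP_remove_observed:
  assumes "UBP E (X - {k}) i j" "\<not> UBP E X i j"
  shows "(k, i) \<in> E \<or> (k, j) \<in> E"
proof -
  obtain p1 p2 where p: "is_dpath E p1" "is_dpath E p2" "hd p1 = hd p2"
      "last p1 = i" "last p2 = j" "length p1 \<ge> 2" "length p2 \<ge> 2"
      "set (tl p1) \<inter> set (tl p2) = {}"
      "p1 ! (length p1 - 2) \<notin> X - {k}" "p2 ! (length p2 - 2) \<notin> X - {k}"
    using assms(1) unfolding UBP_def by blast
  have "p1 ! (length p1 - 2) = k \<or> p2 ! (length p2 - 2) = k"
    using p assms(2) unfolding UBP_def by blast
  then show ?thesis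
    using is_dpath_last_edge[OF p(1,6)] is_dpath_last_edge[OF p(2,7)] p(4,5) by auto
qed

lemma UBP_or_UCP_remove_observed:
  assumes "UBP_or_UCP E (X - {k}) i j" "\<not> UBP_or_UCP E X i j"
  shows "(k, i) \<in> E \<or> (k, j) \<in> E"
  using assms UCP_remove_observed[of E X k i j] UCP_remove_observed[of E X k j i]
    UBP_remove_observed[of E X k i j] UBP_remove_observed[of E X k j i]
  unfolding UBP_or_UCP_def by blast

lemma standing_facts_visible_parentI:
  assumes "standing_facts M X E val GC" "X' \<subseteq> X" "i \<in> X'" "j \<in> X'" "i \<noteq> j"
    and "\<forall>g1\<in>GC. \<forall>g2\<in>GC. \<forall>Ms Ns. Ms \<subseteq> X' - {i, j} \<longrightarrow> Ns \<subseteq> X' - {j} \<longrightarrow>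
           \<not> indep_rv M (resid val g1 i Ms) (resid val g2 j Ns)"
    and "\<exists>g1\<in>GC. \<exists>g2\<in>GC. \<exists>Ms Ns. Ms \<subseteq> X' - {i} \<and> Ns \<subseteq> X' - {i, j} \<and>
           indep_rv M (resid val g1 i Ms) (resid val g2 j Ns)"
  shows "visible_parent E X' j i"
  using assms(1)[unfolded standing_facts_def, rule_format, OF assms(2-5)] assms(6,7) by blast

lemma standing_facts_invisibleI:
  assumes "standing_facts M X E val GC" "X' \<subseteq> X" "i \<in> X'" "j \<in> X'" "i \<noteq> j"
    and "\<forall>g1\<in>GC. \<forall>g2\<in>GC. \<forall>Ms Ns. Ms \<subseteq> X' - {i} \<longrightarrow> Ns \<subseteq> X' - {j} \<longrightarrow>
           \<not> indep_rv M (resid val g1 i Ms) (resid val g2 j Ns)"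
  shows "invisible E X' i j"
  using assms(1)[unfolded standing_facts_def, rule_format, OF assms(2-5)] assms(6) by blast

theorem lemma4:
  fixes M :: "'a measure" and V X :: "'v set" and E :: "('v \<times> 'v) set"
    and f :: "'v \<Rightarrow> 'v \<Rightarrow> real \<Rightarrow> real" and n val :: "'v \<Rightarrow> 'a \<Rightarrow> real"
    and GC :: "('v \<Rightarrow> real \<Rightarrow> real) set" and i j :: 'v and K :: "'v set"
  assumes model: "additive_model M V X E f n val"
    and cfc: "CFC M V E val"
    and fclass: "function_class M V X n val GC"
    and facts: "standing_facts M X E val GC"
    and ij: "i \<in> X" "j \<in> X" "i \<noteq> j"
    and K: "K \<subseteq> X" "i \<notin> K" "j \<notin> K"
    and a: "\<forall>k\<in>K. \<forall>Ms Ns. Ms \<subseteq> X - {i, k} \<longrightarrow> Ns \<subseteq> X - {j, k} \<longrightarrow>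
              (\<forall>g1\<in>GC. \<forall>g2\<in>GC. \<not> indep_rv M (resid val g1 i Ms) (resid val g2 j Ns))"
    and b: "\<forall>Ms Ns. Ms \<subseteq> X - {i, j} \<longrightarrow> Ns \<subseteq> X - {j} \<longrightarrow>
              (\<forall>g1\<in>GC. \<forall>g2\<in>GC. \<not> indep_rv M (resid val g1 i Ms) (resid val g2 j Ns))"
    and c: "\<exists>Q1 Q2. Q1 \<subseteq> K \<and> Q2 \<subseteq> K \<and> Q1 \<union> Q2 = K \<and>
              (\<exists>g1\<in>GC. \<exists>g2\<in>GC. \<exists>Ms Ns. Ms \<subseteq> X - ({i, j} \<union> K) \<and> Ns \<subseteq> X - ({i, j} \<union> K) \<and>
                 indep_rv M (resid val g1 i (Ms \<union> {j} \<union> Q1)) (resid val g2 j (Ns \<union> Q2)))"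
  shows "visible_parent E X j i \<and> (\<forall>k\<in>K. (k, i) \<in> E \<or> (k, j) \<in> E) \<and> (\<forall>k\<in>K. (k, i) \<in> E\<^sup>+)"
proof -
  from c obtain Q1 Q2 g1 g2 Ms Ns where "Q1 \<subseteq> K" "Q2 \<subseteq> K" "g1 \<in> GC" "g2 \<in> GC"
      "Ms \<subseteq> X - ({i, j} \<union> K)" "Ns \<subseteq> X - ({i, j} \<union> K)"
      "indep_rv M (resid val g1 i (Ms \<union> {j} \<union> Q1)) (resid val g2 j (Ns \<union> Q2))"
    by blast
  moreover have "Ms \<union> {j} \<union> Q1 \<subseteq> X - {i}" "Ns \<union> Q2 \<subseteq> X - {i, j}"
    using calculation K ij by auto
  ultimately have vp: "visible_parent E X j i"
    using standing_facts_visible_parentI[OF facts subset_refl ij] b by blast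
  have par: "(k, i) \<in> E \<or> (k, j) \<in> E" if "k \<in> K" for k
  proof (rule UBP_or_UCP_remove_observed)
    have "X - {k} - {i} = X - {i, k}" "X - {k} - {j} = X - {j, k}" by auto
    with a \<open>k \<in> K\<close> have "invisible E (X - {k}) i j"
      using standing_facts_invisibleI[OF facts, of "X - {k}" i j] K ij by auto
    then show "UBP_or_UCP E (X - {k}) i j" unfolding invisible_def .
    show "\<not> UBP_or_UCP E X i j" using vp unfolding visible_parent_def by blast
  qed
  have "(j, i) \<in> E" using vp unfolding visible_parent_def by blast
  then show ?thesis using vp par by (meson r_into_trancl' trancl_into_trancl2)
qed

end
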